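(* Let $n\ge 2$, $\sigma\ge 0$, let $z\in\mathbb{C}^n$ satisfy $|z_1|=\cdots=|z_n|=1$, let $W\in\mathbb{C}^{n\times n}$ be $z$-discordant, and let $C=zz^*+\sigma W$. If $x$ is a global optimizer of \[\max_{x\in\mathbb{C}^n} x^*Cx \quad\text{subject to } |x_1|=\cdots=|x_n|=1\] with global phase such that $z^*x=|z^*x|$, then \[\|x-z\|_\infty\le 6\left(\sqrt{\log n}+29\sigma\right)\sigma n^{-1/2}.\]
   Context: For $z\in\mathbb{C}^n$ with unit-modulus entries, a matrix $W\in\mathbb{C}^{n\times n}$ is called $z$-discordant if it is Hermitian and satisfies both $\|W\|_{\mathrm{op}}\le 3\sqrt{n}$ (operator norm = largest singular value) and $\|Wz\|_\infty\le 3\sqrt{n\log n}$, with $\log$ the natural logarithm. *)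

theory Defs
  imports "HOL-Analysis.Analysis"
begin

text \<open>Vectors in C^n are complex^'n, n x n matrices are complex^'n^'n (n = CARD('n)).\<close>

definition hermitian :: "complex^'n^'n \<Rightarrow> bool" where
  "hermitian W \<longleftrightarrow> (\<forall>i j. W $ i $ j = cnj (W $ j $ i))"

text \<open>Operator norm (largest singular value) w.r.t. the Euclidean norm.\<close>
definition op_norm :: "complex^'n^'n \<Rightarrow> real" where
  "op_norm W = onorm (\<lambda>v. W *v v)"

definition inf_norm :: "complex^'n \<Rightarrow> real" where
  "inf_norm v = Max (range (\<lambda>i. cmod (v $ i)))"

definition cinner :: "complex^'n \<Rightarrow> complex^'n \<Rightarrow> complex" where
  "cinner u v = (\<Sum>i\<in>UNIV. cnj (u $ i) * v $ i)"

definition qform :: "complex^'n^'n \<Rightarrow> complex^'n \<Rightarrow> complex" where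
  "qform C x = cinner x (C *v x)"

definition unimod :: "complex^'n \<Rightarrow> bool" where
  "unimod x \<longleftrightarrow> (\<forall>i. cmod (x $ i) = 1)"

definition discordant :: "complex^'n \<Rightarrow> complex^'n^'n \<Rightarrow> bool" where
  "discordant z W \<longleftrightarrow> hermitian W
     \<and> op_norm W \<le> 3 * sqrt (real CARD('n))
     \<and> inf_norm (W *v z) \<le> 3 * sqrt (real CARD('n) * ln (real CARD('n)))"

definition outer :: "complex^'n \<Rightarrow> complex^'n^'n" where
  "outer z = (\<chi> i j. z $ i * cnj (z $ j))"

end

theory Submission
  imports Defs
begin

text \<open>Write \<open>n = CARD('n)\<close>, \<open>m = |z\<^sup>* x|\<close> and \<open>d = \<parallel>x - z\<parallel>\<close>, so that \<open>d\<^sup>2 = 2 (n - m)\<close>.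
  Optimality of \<open>x\<close> against the feasible point \<open>z\<close> gives
  \<open>n\<^sup>2 - m\<^sup>2 \<le> \<sigma> (x\<^sup>* W x - z\<^sup>* W z)\<close>; bounding the right-hand side through \<open>\<parallel>W\<parallel> \<le> 3\<surd>n\<close>,
  once crudely and once after expanding around \<open>z\<close>, yields \<open>d (1 - 6\<sigma>/\<surd>n) \<le> 6\<sigma>\<close>.
  Optimality against the feasible point obtained from \<open>x\<close> by resetting the single entry \<open>x\<^sub>i\<close>
  to \<open>z\<^sub>i\<close> gives, to second order, \<open>|x\<^sub>i - z\<^sub>i| (m + 1 - 3\<sigma>\<surd>n) \<le> 2\<sigma> |(W x)\<^sub>i|\<close>, and
  \<open>|(W x)\<^sub>i| \<le> \<parallel>W z\<parallel>\<^sub>\<infinity> + \<parallel>W\<parallel> d \<le> 3\<surd>n (\<surd>(log n) + d)\<close> by discordance. The remaining work is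
  real arithmetic in \<open>t = \<sigma>/\<surd>n\<close>: for \<open>t \<ge> 0.11\<close> the claimed bound exceeds the trivial bound 2,
  for \<open>0.06 \<le> t \<le> 0.11\<close> it exceeds the bound on \<open>d\<close>, and for \<open>t < 0.06\<close> the first
  estimate keeps \<open>m\<close> close to \<open>n\<close>, so the entrywise inequality can be divided through.\<close>

section \<open>Vectors, matrices and Hermitian forms\<close>

lemma norm_vec_power2: "(norm v)\<^sup>2 = (\<Sum>i\<in>UNIV. (cmod (v $ i))\<^sup>2)"
  for v :: "complex^'n"
  by (simp add: norm_vec_def L2_set_def sum_nonneg)

lemma norm_unimod: "unimod v \<Longrightarrow> norm v = sqrt (real CARD('n))"
  for v :: "complex^'n"
  by (simp add: norm_vec_def L2_set_def unimod_def)

lemma norm_axis_complex_1: "norm (axis i (1::complex)) = 1"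
proof -
  have "(\<Sum>j\<in>UNIV. (cmod (axis i (1::complex) $ j))\<^sup>2) = (\<Sum>j\<in>UNIV. if j = i then 1 else 0)"
    by (intro sum.cong) (auto simp: axis_def)
  then show ?thesis by (simp add: norm_vec_def L2_set_def)
qed

lemma cinner_norm_le: "cmod (cinner u v) \<le> norm u * norm v"
proof -
  have "cmod (cinner u v) \<le> (\<Sum>i\<in>UNIV. \<bar>cmod (u $ i)\<bar> * \<bar>cmod (v $ i)\<bar>)"
    unfolding cinner_def by (rule order_trans[OF norm_sum]) (simp add: norm_mult)
  also have "\<dots> \<le> norm u * norm v"
    unfolding norm_vec_def by (rule L2_set_mult_ineq)
  finally show ?thesis .
qed

lemma cinner_add_left: "cinner (u + w) v = cinner u v + cinner w v"
  by (simp add: cinner_def sum.distrib algebra_simps)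

lemma cinner_add_right: "cinner u (v + w) = cinner u v + cinner u w"
  by (simp add: cinner_def sum.distrib algebra_simps)

lemma cinner_axis_left: "cinner (axis i a) v = cnj a * v $ i"
proof -
  have "cinner (axis i a) v = (\<Sum>j\<in>UNIV. if j = i then cnj a * v $ i else 0)"
    unfolding cinner_def by (intro sum.cong) (auto simp: axis_def)
  then show ?thesis by simp
qed

lemma nth_le_inf_norm: "cmod (v $ i) \<le> inf_norm v"
  unfolding inf_norm_def by (rule Max_ge) auto

lemma inf_norm_le: "(\<And>i. cmod (v $ i) \<le> b) \<Longrightarrow> inf_norm v \<le> b"
  unfolding inf_norm_def by (subst Max_le_iff) auto

lemma norm_matrix_vector_le:
  fixes A :: "complex^'n^'n"
  shows "norm (A *v v) \<le> op_norm A * norm v"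
  unfolding op_norm_def by (rule onorm[OF matrix_vector_mul_bounded_linear])

lemma matrix_vector_mult_axis_nth: "(A *v axis i a) $ k = A $ k $ i * a"
proof -
  have "(A *v axis i a) $ k = (\<Sum>j\<in>UNIV. if j = i then A $ k $ i * a else 0)"
    unfolding matrix_vector_mult_def vec_lambda_beta by (intro sum.cong) (auto simp: axis_def)
  then show ?thesis by simp
qed

lemma cmod_cinner_matrix_vector_le:
  "cmod (cinner u (A *v v)) \<le> op_norm A * (norm u * norm v)"
proof -
  have "cmod (cinner u (A *v v)) \<le> norm u * (op_norm A * norm v)"
    using cinner_norm_le[of u "A *v v"] norm_matrix_vector_le[of A v]
    by (meson mult_left_mono norm_ge_zero order_trans)
  then show ?thesis by (simp add: mult_ac)
qed

lemma cmod_qform_le: "cmod (qform A v) \<le> op_norm A * (norm v)\<^sup>2"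
  using cmod_cinner_matrix_vector_le[of v A v] by (simp add: qform_def power2_eq_square)

lemma cmod_diagonal_le_op_norm: "cmod (A $ i $ i) \<le> op_norm A"
  using Finite_Cartesian_Product.norm_nth_le[of "A *v axis i 1" i] norm_matrix_vector_le[of A "axis i 1"]
  by (simp add: matrix_vector_mult_axis_nth norm_axis_complex_1)

lemma cmod_matrix_vector_nth_le:
  "cmod ((A *v x) $ i) \<le> inf_norm (A *v z) + op_norm A * norm (x - z)"
proof -
  have "(A *v x) $ i = (A *v z) $ i + (A *v (x - z)) $ i"
    by (simp add: matrix_vector_mult_diff_distrib)
  then have "cmod ((A *v x) $ i) \<le> cmod ((A *v z) $ i) + cmod ((A *v (x - z)) $ i)"
    by (metis norm_triangle_ineq)
  also have "\<dots> \<le> inf_norm (A *v z) + op_norm A * norm (x - z)"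
    using nth_le_inf_norm Finite_Cartesian_Product.norm_nth_le norm_matrix_vector_le
    by (meson add_mono order_trans)
  finally show ?thesis .
qed

lemma hermitian_cinner_commute:
  assumes "hermitian A"
  shows "cinner x (A *v y) = cnj (cinner y (A *v x))"
proof -
  have entry: "cnj (A $ j $ i) = A $ i $ j" for i j
    using assms unfolding hermitian_def by (metis complex_cnj_cnj)
  have "cnj (cinner y (A *v x)) = (\<Sum>j\<in>UNIV. \<Sum>i\<in>UNIV. y $ j * (cnj (A $ j $ i) * cnj (x $ i)))"
    by (simp add: cinner_def matrix_vector_mult_def sum_distrib_left)
  also have "\<dots> = (\<Sum>j\<in>UNIV. \<Sum>i\<in>UNIV. cnj (x $ i) * (A $ i $ j * y $ j))"
    by (simp add: entry mult_ac)
  also have "\<dots> = cinner x (A *v y)"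
    by (subst sum.swap) (simp add: cinner_def matrix_vector_mult_def sum_distrib_left)
  finally show ?thesis ..
qed

lemma Re_qform_add:
  assumes "hermitian A"
  shows "Re (qform A (x + h)) = Re (qform A x) + 2 * Re (cinner h (A *v x)) + Re (qform A h)"
proof -
  have "qform A (x + h) = qform A x + cinner x (A *v h) + cinner h (A *v x) + qform A h"
    by (simp add: qform_def matrix_vector_right_distrib cinner_add_left cinner_add_right)
  then show ?thesis using hermitian_cinner_commute[OF assms, of x h] by simp
qed

lemma Re_qform_add_axis:
  assumes "hermitian A"
  shows "Re (qform A (x + axis i a))
    = Re (qform A x) + 2 * Re (cnj a * (A *v x) $ i) + (cmod a)\<^sup>2 * Re (A $ i $ i)"
proof -
  have "qform A (axis i a) = (a * cnj a) * A $ i $ i"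
    by (simp add: qform_def cinner_axis_left matrix_vector_mult_axis_nth mult_ac)
  also have "\<dots> = of_real ((cmod a)\<^sup>2) * A $ i $ i"
    by (simp flip: complex_norm_square)
  finally have "qform A (axis i a) = of_real ((cmod a)\<^sup>2) * A $ i $ i" .
  then show ?thesis
    using Re_qform_add[OF assms, of x "axis i a"] by (simp add: cinner_axis_left)
qed

lemma Re_qform_diff_le:
  assumes "op_norm A \<le> K"
  shows "Re (qform A x) - Re (qform A z) \<le> K * ((norm x)\<^sup>2 + (norm z)\<^sup>2)"
proof -
  have bound: "cmod (qform A v) \<le> K * (norm v)\<^sup>2" for v
    using cmod_qform_le[of A v] assms by (meson mult_right_mono zero_le_power2 order_trans)
  show ?thesis
    using bound[of x] bound[of z] complex_Re_le_cmod[of "qform A x"] abs_Re_le_cmod[of "qform A z"]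
    by (simp add: algebra_simps)
qed

lemma Re_qform_diff_le_hermitian:
  assumes "hermitian A" "op_norm A \<le> K"
  shows "Re (qform A x) - Re (qform A z) \<le> K * (2 * norm z * norm (x - z) + (norm (x - z))\<^sup>2)"
proof -
  have "Re (qform A x) - Re (qform A z) = 2 * Re (cinner (x - z) (A *v z)) + Re (qform A (x - z))"
    using Re_qform_add[OF assms(1), of z "x - z"] by simp
  also have "\<dots> \<le> 2 * (K * (norm (x - z) * norm z)) + K * (norm (x - z))\<^sup>2"
  proof (intro add_mono mult_left_mono)
    show "Re (cinner (x - z) (A *v z)) \<le> K * (norm (x - z) * norm z)"
      using cmod_cinner_matrix_vector_le[of "x - z" A z] complex_Re_le_cmod assms(2)
      by (meson mult_right_mono zero_le_mult_iff norm_ge_zero order_trans)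
    show "Re (qform A (x - z)) \<le> K * (norm (x - z))\<^sup>2"
      using cmod_qform_le[of A "x - z"] complex_Re_le_cmod assms(2)
      by (meson mult_right_mono zero_le_power2 order_trans)
  qed simp
  finally show ?thesis by (simp add: algebra_simps)
qed

section \<open>The objective matrix and unimodular vectors\<close>

lemma hermitian_outer_add_scaleR:
  assumes "hermitian W"
  shows "hermitian (outer z + c *\<^sub>R W)"
  unfolding hermitian_def
proof (intro allI)
  fix i j
  have "W $ i $ j = cnj (W $ j $ i)"
    using assms unfolding hermitian_def by blast
  then show "(outer z + c *\<^sub>R W) $ i $ j = cnj ((outer z + c *\<^sub>R W) $ j $ i)"
    by (simp add: outer_def mult.commute)
qed

lemma matrix_vector_outer_add_scaleR_nth:
  "((outer z + c *\<^sub>R W) *v v) $ i = z $ i * cinner z v + of_real c * (W *v v) $ i"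
  by (simp add: matrix_vector_mult_def outer_def cinner_def sum.distrib
      sum_distrib_left algebra_simps)
    (simp add: scaleR_conv_of_real sum_distrib_left)

lemma qform_outer: "qform (outer z) y = of_real ((cmod (cinner z y))\<^sup>2)"
proof -
  have "qform (outer z) y = cnj (cinner z y) * cinner z y"
    by (simp add: qform_def cinner_def outer_def matrix_vector_mult_def sum_distrib_left
        sum_distrib_right mult_ac)
  then show ?thesis by (metis complex_norm_square mult.commute)
qed

lemma Re_qform_outer_add_scaleR:
  "Re (qform (outer z + c *\<^sub>R W) y) = (cmod (cinner z y))\<^sup>2 + c * Re (qform W y)"
proof -
  have "qform (outer z + c *\<^sub>R W) y = qform (outer z) y + of_real c * qform W y"
    by (simp add: qform_def cinner_def matrix_vector_mult_def sum.distrib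
        sum_distrib_left algebra_simps)
      (simp add: scaleR_conv_of_real sum_distrib_left)
  then show ?thesis by (simp add: qform_outer)
qed

lemma cnj_mult_self_unimodular: "cmod w = 1 \<Longrightarrow> cnj w * w = 1"
  by (metis complex_norm_square mult.commute of_real_1 power_one)

lemma cmod_diff_power2_unimodular:
  assumes "cmod a = 1" "cmod b = 1"
  shows "(cmod (a - b))\<^sup>2 = 2 - 2 * Re (cnj b * a)"
proof -
  have "(cmod a)\<^sup>2 = 1" "(cmod b)\<^sup>2 = 1"
    using assms by simp_all
  then have "(Re a)\<^sup>2 + (Im a)\<^sup>2 = 1" "(Re b)\<^sup>2 + (Im b)\<^sup>2 = 1"
    by (simp_all add: cmod_power2)
  moreover have "(cmod (a - b))\<^sup>2 = (Re a - Re b)\<^sup>2 + (Im a - Im b)\<^sup>2"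
    by (simp add: cmod_power2)
  ultimately show ?thesis by (simp add: power2_eq_square algebra_simps)
qed

lemma cinner_self_unimod: "unimod z \<Longrightarrow> cinner z z = of_nat CARD('n)"
  for z :: "complex^'n"
  by (simp add: cinner_def unimod_def cnj_mult_self_unimodular)

lemma norm_diff_power2_unimod:
  fixes x z :: "complex^'n"
  assumes "unimod x" "unimod z"
  shows "(norm (x - z))\<^sup>2 = 2 * real CARD('n) - 2 * Re (cinner z x)"
proof -
  have "(norm (x - z))\<^sup>2 = (\<Sum>i\<in>UNIV. 2 - 2 * Re (cnj (z $ i) * x $ i))"
    unfolding norm_vec_power2 using assms
    by (intro sum.cong) (auto simp: unimod_def cmod_diff_power2_unimodular)
  then show ?thesis by (simp add: sum_subtractf cinner_def sum_distrib_left)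
qed

lemma unimod_add_axis:
  assumes "unimod x" "cmod a = 1"
  shows "unimod (x + axis i (a - x $ i))"
  using assms by (auto simp: unimod_def axis_def)

section \<open>Optimality against \<open>z\<close> and against one-entry changes of \<open>x\<close>\<close>

lemma optimizer_gap_le:
  fixes z x :: "complex^'n" and W :: "complex^'n^'n"
  assumes W: "hermitian W" "op_norm W \<le> K" and \<sigma>: "\<sigma> \<ge> 0"
    and z: "unimod z" and x: "unimod x"
    and opt: "Re (qform (outer z + \<sigma> *\<^sub>R W) z) \<le> Re (qform (outer z + \<sigma> *\<^sub>R W) x)"
    and zx: "cinner z x = of_real m"
  shows "(real CARD('n))\<^sup>2 - m\<^sup>2 \<le> \<sigma> * K * (2 * real CARD('n))"
    and "(real CARD('n))\<^sup>2 - m\<^sup>2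
      \<le> \<sigma> * K * (2 * sqrt (real CARD('n)) * norm (x - z) + (norm (x - z))\<^sup>2)"
proof -
  have gap: "(real CARD('n))\<^sup>2 - m\<^sup>2 \<le> \<sigma> * (Re (qform W x) - Re (qform W z))"
    using opt z zx by (simp add: Re_qform_outer_add_scaleR cinner_self_unimod algebra_simps)
  show "(real CARD('n))\<^sup>2 - m\<^sup>2 \<le> \<sigma> * K * (2 * real CARD('n))"
    using order_trans[OF gap mult_left_mono[OF Re_qform_diff_le[OF W(2), of x z] \<sigma>]]
    by (simp add: norm_unimod[OF x] norm_unimod[OF z])
  show "(real CARD('n))\<^sup>2 - m\<^sup>2
      \<le> \<sigma> * K * (2 * sqrt (real CARD('n)) * norm (x - z) + (norm (x - z))\<^sup>2)"
    using order_trans[OF gap mult_left_mono[OF Re_qform_diff_le_hermitian[OF W, of x z] \<sigma>]]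
    by (simp add: norm_unimod[OF z] mult.assoc)
qed

lemma optimizer_entry_expansion:
  fixes z x :: "complex^'n" and W :: "complex^'n^'n"
  assumes W: "hermitian W" and z: "unimod z" and x: "unimod x"
    and opt: "Re (qform (outer z + \<sigma> *\<^sub>R W) (x + axis i (z $ i - x $ i)))
      \<le> Re (qform (outer z + \<sigma> *\<^sub>R W) x)"
    and zx: "cinner z x = of_real m"
  shows "m * (cmod (x $ i - z $ i))\<^sup>2 + 2 * \<sigma> * Re (cnj (z $ i - x $ i) * (W *v x) $ i)
    + (cmod (x $ i - z $ i))\<^sup>2 * (1 + \<sigma> * Re (W $ i $ i)) \<le> 0"
proof -
  define a where "a = z $ i - x $ i"
  define \<epsilon> where "\<epsilon> = cmod (x $ i - z $ i)"
  define R where "R = Re (cnj a * (W *v x) $ i)"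
  define Q where "Q = Re (W $ i $ i)"
  have zi: "cmod (z $ i) = 1" and xi: "cmod (x $ i) = 1"
    using z x by (auto simp: unimod_def)
  have a: "cmod a = \<epsilon>" "Re (cnj a * z $ i) = \<epsilon>\<^sup>2 / 2"
    using cmod_diff_power2_unimodular[OF xi zi] cnj_mult_self_unimodular[OF zi]
    by (simp_all add: a_def \<epsilon>_def norm_minus_commute algebra_simps)
  have "((outer z + \<sigma> *\<^sub>R W) *v x) $ i = of_real m * z $ i + of_real \<sigma> * (W *v x) $ i"
    by (simp add: matrix_vector_outer_add_scaleR_nth zx mult.commute)
  then have "Re (cnj a * ((outer z + \<sigma> *\<^sub>R W) *v x) $ i) = m * (\<epsilon>\<^sup>2 / 2) + \<sigma> * R"
    unfolding R_def a(2)[symmetric] by (simp add: ring_distribs)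
  moreover have "(outer z + \<sigma> *\<^sub>R W) $ i $ i = 1 + of_real \<sigma> * W $ i $ i"
    using cnj_mult_self_unimodular[OF zi] by (simp add: outer_def mult.commute flip: scaleR_conv_of_real)
  then have "Re ((outer z + \<sigma> *\<^sub>R W) $ i $ i) = 1 + \<sigma> * Q"
    unfolding Q_def by simp
  moreover have "2 * Re (cnj a * ((outer z + \<sigma> *\<^sub>R W) *v x) $ i)
      + (cmod a)\<^sup>2 * Re ((outer z + \<sigma> *\<^sub>R W) $ i $ i) \<le> 0"
    using opt Re_qform_add_axis[OF hermitian_outer_add_scaleR[OF W, of z \<sigma>], of x i a]
    by (simp add: a_def)
  ultimately have "m * \<epsilon>\<^sup>2 + 2 * \<sigma> * R + \<epsilon>\<^sup>2 * (1 + \<sigma> * Q) \<le> 0"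
    using a(1) by (simp add: algebra_simps)
  then show ?thesis
    unfolding \<epsilon>_def R_def Q_def a_def .
qed

lemma optimizer_entry_le:
  fixes z x :: "complex^'n" and W :: "complex^'n^'n"
  assumes W: "hermitian W" "op_norm W \<le> K" "inf_norm (W *v z) \<le> L" and \<sigma>: "\<sigma> \<ge> 0"
    and z: "unimod z" and x: "unimod x"
    and opt: "Re (qform (outer z + \<sigma> *\<^sub>R W) (x + axis i (z $ i - x $ i)))
      \<le> Re (qform (outer z + \<sigma> *\<^sub>R W) x)"
    and zx: "cinner z x = of_real m"
  shows "cmod (x $ i - z $ i) * (m + 1 - \<sigma> * K) \<le> 2 * \<sigma> * (L + K * norm (x - z))"
proof -
  define \<epsilon> where "\<epsilon> = cmod (x $ i - z $ i)"
  define w where "w = (W *v x) $ i"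
  define R where "R = Re (cnj (z $ i - x $ i) * w)"
  define Q where "Q = Re (W $ i $ i)"
  have expansion: "m * \<epsilon>\<^sup>2 + 2 * \<sigma> * R + \<epsilon>\<^sup>2 * (1 + \<sigma> * Q) \<le> 0"
    using optimizer_entry_expansion[OF W(1) z x opt zx] unfolding \<epsilon>_def R_def Q_def w_def .
  have \<epsilon>: "\<epsilon> \<ge> 0" by (simp add: \<epsilon>_def)
  have wL: "cmod w \<le> L + K * norm (x - z)"
    using cmod_matrix_vector_nth_le[of W x i z] W(2,3) unfolding w_def
    by (meson add_mono mult_right_mono norm_ge_zero order_trans)
  have "- R \<le> cmod (cnj (z $ i - x $ i) * w)"
    using abs_Re_le_cmod[of "cnj (z $ i - x $ i) * w"] unfolding R_def by linarith
  also have "\<dots> = \<epsilon> * cmod w"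
    unfolding \<epsilon>_def norm_mult complex_mod_cnj by (simp only: norm_minus_commute)
  also have "\<dots> \<le> \<epsilon> * (L + K * norm (x - z))"
    using wL \<epsilon> by (rule mult_left_mono)
  finally have R: "- R \<le> \<epsilon> * (L + K * norm (x - z))" .
  have "- K \<le> Q"
    using cmod_diagonal_le_op_norm[of W i] abs_Re_le_cmod[of "W $ i $ i"] W(2) unfolding Q_def
    by linarith
  then have "\<sigma> * \<epsilon>\<^sup>2 * (- K) \<le> \<sigma> * \<epsilon>\<^sup>2 * Q"
    using \<sigma> by (intro mult_left_mono) simp_all
  then have "\<epsilon> * (\<epsilon> * (m + 1 - \<sigma> * K)) \<le> \<epsilon> * (2 * \<sigma> * (L + K * norm (x - z)))"
    using expansion mult_left_mono[OF R \<sigma>]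
    unfolding power2_eq_square by (simp add: algebra_simps)
  moreover have "0 \<le> \<sigma> * (L + K * norm (x - z))"
    using \<sigma> wL norm_ge_zero[of w] by (meson mult_nonneg_nonneg order_trans)
  ultimately show ?thesis
    using \<epsilon> unfolding \<epsilon>_def[symmetric]
    by (cases "\<epsilon> = 0") (auto intro: mult_left_le_imp_le)
qed

section \<open>Real arithmetic\<close>

lemma deficit_le_arith:
  fixes N p c :: real
  assumes "N > 0" "0 \<le> p" "p \<le> N" "p * (2 * N - p) \<le> c * N"
  shows "p \<le> c"
proof -
  have "p * N \<le> p * (2 * N - p)"
    using assms(2,3) by (intro mult_left_mono) auto
  then have "p * N \<le> c * N"
    using assms(4) by linarith
  then show ?thesis
    using assms(1) by (rule mult_right_le_imp_le)
qed

lemma distance_bound_arith: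
  fixes N \<sigma> m d :: real
  assumes N: "N > 0" and \<sigma>: "\<sigma> \<ge> 0" and m: "m \<ge> 0" and d: "d \<ge> 0"
    and dm: "d\<^sup>2 = 2 * N - 2 * m"
    and gap1: "N\<^sup>2 - m\<^sup>2 \<le> \<sigma> * (3 * sqrt N) * (2 * N)"
    and gap2: "N\<^sup>2 - m\<^sup>2 \<le> \<sigma> * (3 * sqrt N) * (2 * sqrt N * d + d\<^sup>2)"
  shows "d * (1 - 6 * \<sigma> / sqrt N) \<le> 6 * \<sigma>"
proof -
  define s t p where "s = sqrt N" and "t = \<sigma> / s" and "p = N - m"
  have s: "s > 0" and sN: "s * (s * x) = N * x" for x
    using N by (simp_all add: s_def mult.assoc[symmetric])
  have \<sigma>_eq: "\<sigma> = t * s" using s by (simp add: t_def)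
  have p: "d * d = 2 * p" "p \<ge> 0" "p \<le> N"
    using dm m mult_nonneg_nonneg[OF d d] by (auto simp: p_def power2_eq_square)
  have gap: "N\<^sup>2 - m\<^sup>2 = p * (2 * N - p)"
    by (simp add: p_def power2_eq_square algebra_simps)
  have "p * (2 * N - p) \<le> (6 * t * N) * N"
    using gap1 unfolding gap \<sigma>_eq s_def[symmetric] by (simp add: algebra_simps sN)
  then have "p \<le> 6 * t * N"
    by (rule deficit_le_arith[OF N p(2,3)])
  then have "p * (2 * N - 12 * t * N) \<le> p * (2 * N - p - 6 * t * N)"
    using p by (intro mult_left_mono) (auto simp: algebra_simps)
  also have "\<dots> \<le> 6 * t * s * N * d"
  proof -
    have "\<sigma> * (3 * s) * (2 * s * d + d\<^sup>2) = 6 * t * s * N * d + 6 * t * N * p"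
      using p unfolding \<sigma>_eq power2_eq_square by (simp add: algebra_simps sN)
    then show ?thesis
      using gap2 unfolding gap s_def[symmetric] by (simp add: algebra_simps)
  qed
  finally have "(p * (2 - 12 * t)) * N \<le> (6 * t * s * d) * N"
    by (simp add: algebra_simps)
  then have "p * (2 - 12 * t) \<le> 6 * t * s * d"
    using N by simp
  moreover have "d * (1 - 6 * t) * d = (d * d) * (1 - 6 * t)"
    by (simp add: algebra_simps)
  ultimately have "d * (1 - 6 * t) * d \<le> 6 * t * s * d"
    unfolding p(1) by (simp add: algebra_simps)
  then have "d * (1 - 6 * t) \<le> 6 * t * s"
    using d s \<sigma> by (cases "d = 0") (simp add: t_def, metis mult_right_le_imp_le order_less_le)
  then show ?thesis
    using s by (simp add: t_def flip: s_def)
qed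

lemma entry_bound_large_noise_arith:
  fixes s t l \<epsilon> :: real
  assumes "s \<ge> 1" "t \<ge> 11/100" "l \<ge> 0" "\<epsilon> \<le> 2"
  shows "\<epsilon> \<le> 6 * (l + 29 * t * s) * t"
proof -
  have "121/10000 \<le> t * t"
    using assms(2) mult_mono[of "11/100" t "11/100" t] by simp
  then have "121/10000 * 1 \<le> t * t * s"
    using assms(1) by (intro mult_mono) auto
  moreover have "0 \<le> l * t"
    using assms(2,3) by simp
  ultimately show ?thesis
    using assms(4) by (simp add: algebra_simps)
qed

lemma entry_bound_moderate_noise_arith:
  fixes s t l d \<epsilon> :: real
  assumes t: "3/50 \<le> t" "t \<le> 11/100" and "l \<ge> 0" "d \<ge> 0" "\<epsilon> \<le> d"
    and dist: "d * (1 - 6 * t) \<le> 6 * t * s"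
  shows "\<epsilon> \<le> 6 * (l + 29 * t * s) * t"
proof -
  have "0 \<le> (t - 3/50) * (11/100 - t)"
    using t by simp
  then have "1 \<le> 29 * t * (1 - 6 * t)"
    using t by argo
  then have "\<epsilon> \<le> 29 * t * (d * (1 - 6 * t))"
    using assms(4,5) mult_left_mono[of 1 "29 * t * (1 - 6 * t)" d] by (simp add: algebra_simps)
  also have "\<dots> \<le> 29 * t * (6 * t * s)"
    using dist t by (intro mult_left_mono) auto
  also have "\<dots> \<le> 6 * (l + 29 * t * s) * t"
    using assms(3) t by (simp add: algebra_simps)
  finally show ?thesis .
qed

lemma small_noise_distance_arith:
  fixes s t d :: real
  assumes s: "s \<ge> 0" and t: "0 \<le> t" "t \<le> 3/50" and d: "d \<ge> 0"
    and dist: "d * (1 - 6 * t) \<le> 6 * t * s"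
  shows "d \<le> 10 * t * s" and "d\<^sup>2 \<le> 6 * t * s\<^sup>2"
proof -
  have "d * (16/25) \<le> d * (1 - 6 * t)"
    using d t by (intro mult_left_mono) auto
  moreover have "0 \<le> t * s"
    using t s by simp
  ultimately show d_le: "d \<le> 10 * t * s"
    using dist by linarith
  have "d\<^sup>2 \<le> (10 * t * s)\<^sup>2"
    using d d_le by (intro power_mono) auto
  also have "\<dots> = (100 * (t * t)) * s\<^sup>2"
    by (simp add: power_mult_distrib power2_eq_square)
  also have "\<dots> \<le> (6 * t) * s\<^sup>2"
    using t mult_right_mono[of t "3/50" t] by (intro mult_right_mono) auto
  finally show "d\<^sup>2 \<le> 6 * t * s\<^sup>2" .
qed

lemma entry_bound_small_noise_arith:
  fixes s t l d \<epsilon> :: real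
  assumes s: "s \<ge> 1" and t: "0 \<le> t" "t < 3/50" and l: "0 \<le> l" "l \<le> s"
    and d: "d \<ge> 0" and \<epsilon>: "\<epsilon> \<ge> 0"
    and dist: "d * (1 - 6 * t) \<le> 6 * t * s"
    and entry: "\<epsilon> * (s\<^sup>2 - d\<^sup>2 / 2 + 1 - 3 * t * s\<^sup>2) \<le> 6 * t * s\<^sup>2 * (l + d)"
  shows "\<epsilon> \<le> 6 * (l + 29 * t * s) * t"
proof -
  have d_le: "d \<le> 10 * t * s" and "d\<^sup>2 \<le> 6 * t * s\<^sup>2"
    using small_noise_distance_arith[of s t d] s t d dist by simp_all
  then have den: "s\<^sup>2 * (1 - 6 * t) \<le> s\<^sup>2 - d\<^sup>2 / 2 + 1 - 3 * t * s\<^sup>2"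
    by (simp add: algebra_simps)
  have tt: "t * t \<le> 3/50 * t"
    using t mult_right_mono[of t "3/50" t] by simp
  have "t * l \<le> t * s"
    using t l by (intro mult_left_mono) auto
  moreover have "t * t * s \<le> 3/50 * (t * s)"
    using mult_right_mono[OF tt, of s] s by (simp add: mult.assoc)
  moreover have "(l + 29 * t * s) * (1 - 6 * t) = l + 29 * (t * s) - 6 * (t * l) - 174 * (t * t * s)"
    by (simp add: algebra_simps)
  ultimately have num: "l + d \<le> (l + 29 * t * s) * (1 - 6 * t)"
    using d_le mult_nonneg_nonneg[OF t(1), of s] s by (simp only: mult.assoc) simp
  have "\<epsilon> * (s\<^sup>2 * (1 - 6 * t)) \<le> \<epsilon> * (s\<^sup>2 - d\<^sup>2 / 2 + 1 - 3 * t * s\<^sup>2)"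
    using den \<epsilon> by (rule mult_left_mono)
  also have "\<dots> \<le> 6 * t * s\<^sup>2 * (l + d)"
    by (rule entry)
  also have "\<dots> \<le> 6 * t * s\<^sup>2 * ((l + 29 * t * s) * (1 - 6 * t))"
    using num t by (intro mult_left_mono) auto
  finally have "\<epsilon> * (s\<^sup>2 * (1 - 6 * t)) \<le> (6 * (l + 29 * t * s) * t) * (s\<^sup>2 * (1 - 6 * t))"
    by (simp add: algebra_simps)
  moreover have "s\<^sup>2 * (1 - 6 * t) > 0"
    using s t by simp
  ultimately show ?thesis
    by (rule mult_right_le_imp_le)
qed

lemma entry_bound_arith:
  fixes N \<sigma> l d m \<epsilon> :: real
  assumes N: "N \<ge> 1" and \<sigma>: "\<sigma> \<ge> 0" and l: "0 \<le> l" "l \<le> sqrt N" and d: "d \<ge> 0"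
    and dm: "d\<^sup>2 = 2 * N - 2 * m"
    and dist: "d * (1 - 6 * \<sigma> / sqrt N) \<le> 6 * \<sigma>"
    and \<epsilon>: "0 \<le> \<epsilon>" "\<epsilon> \<le> 2" "\<epsilon> \<le> d"
    and entry: "\<epsilon> * (m + 1 - \<sigma> * (3 * sqrt N)) \<le> 2 * \<sigma> * (3 * sqrt N * l + 3 * sqrt N * d)"
  shows "\<epsilon> \<le> 6 * (l + 29 * \<sigma>) * \<sigma> / sqrt N"
proof -
  define s t where "s = sqrt N" and "t = \<sigma> / s"
  have s: "s \<ge> 1" "s\<^sup>2 = N" and l': "l \<le> s"
    using N l(2) by (simp_all add: s_def)
  have \<sigma>_eq: "\<sigma> = t * s" and t: "t \<ge> 0" using s \<sigma> by (simp_all add: t_def)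
  have goal: "6 * (l + 29 * \<sigma>) * \<sigma> / sqrt N = 6 * (l + 29 * t * s) * t"
    using s by (simp add: \<sigma>_eq flip: s_def)
  have dist': "d * (1 - 6 * t) \<le> 6 * t * s"
    using dist s(1) by (simp add: t_def flip: s_def)
  consider "t < 3/50" | "3/50 \<le> t" "t \<le> 11/100" | "t \<ge> 11/100" by linarith
  then have "\<epsilon> \<le> 6 * (l + 29 * t * s) * t"
  proof cases
    case 1
    have m_eq: "m = s\<^sup>2 - d\<^sup>2 / 2"
      using dm s(2) by linarith
    have "\<epsilon> * (s\<^sup>2 - d\<^sup>2 / 2 + 1 - 3 * t * s\<^sup>2) \<le> 6 * t * s\<^sup>2 * (l + d)"
      using entry unfolding m_eq \<sigma>_eq s_def[symmetric] by (simp add: power2_eq_square algebra_simps)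
    then show ?thesis
      by (rule entry_bound_small_noise_arith[OF s(1) t 1 l(1) l' d \<epsilon>(1) dist'])
  next
    case 2
    then show ?thesis
      using entry_bound_moderate_noise_arith l(1) d \<epsilon>(3) dist' by blast
  next
    case 3
    then show ?thesis
      using entry_bound_large_noise_arith s(1) l(1) \<epsilon>(2) by blast
  qed
  then show ?thesis
    unfolding goal .
qed

theorem lemma6:
  fixes z x :: "complex^'n" and W :: "complex^'n^'n" and \<sigma> :: real
  assumes "CARD('n) \<ge> 2"
    and "\<sigma> \<ge> 0"
    and "unimod z"
    and "discordant z W"
    and "unimod x"
    and "\<forall>y. unimod y \<longrightarrow>
           Re (qform (outer z + \<sigma> *\<^sub>R W) y)
           \<le> Re (qform (outer z + \<sigma> *\<^sub>R W) x)"
    and "cinner z x = complex_of_real (cmod (cinner z x))"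
  shows "inf_norm (x - z) \<le> 6 * (sqrt (ln (real CARD('n))) + 29 * \<sigma>) * \<sigma> / sqrt (real CARD('n))"
proof -
  define N s l m d where "N = real CARD('n)" and "s = sqrt N" and "l = sqrt (ln N)"
    and "m = cmod (cinner z x)" and "d = norm (x - z)"
  have N: "N \<ge> 2" using assms(1) by (simp add: N_def)
  have W: "hermitian W" "op_norm W \<le> 3 * s" "inf_norm (W *v z) \<le> 3 * s * l"
    using assms(4) by (simp_all add: discordant_def N_def s_def l_def real_sqrt_mult)
  have l: "0 \<le> l" "l \<le> s"
    using N ln_le_minus_one[of N] by (simp_all add: l_def s_def)
  have zx: "cinner z x = of_real m"
    using assms(7) by (simp add: m_def)
  note opt = assms(6)[rule_format]
  note gap = optimizer_gap_le[OF W(1,2) assms(2,3,5) opt[OF assms(3)] zx, folded N_def s_def d_def]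
  have dm: "d\<^sup>2 = 2 * N - 2 * m"
    using norm_diff_power2_unimod[OF assms(5,3)] zx by (simp add: d_def N_def)
  have dist: "d * (1 - 6 * \<sigma> / sqrt N) \<le> 6 * \<sigma>"
    using N assms(2) gap dm by (intro distance_bound_arith) (simp_all add: m_def d_def s_def)
  have "cmod ((x - z) $ i) \<le> 6 * (l + 29 * \<sigma>) * \<sigma> / s" for i
  proof -
    have zi: "cmod (z $ i) = 1" and xi: "cmod (x $ i) = 1"
      using assms(3,5) by (auto simp: unimod_def)
    note entry = optimizer_entry_le[OF W assms(2,3,5) opt[OF unimod_add_axis[OF assms(5) zi]] zx]
    have "cmod ((x - z) $ i) \<le> d" "cmod ((x - z) $ i) \<le> 2"
      using Finite_Cartesian_Product.norm_nth_le[of "x - z" i] norm_triangle_ineq4[of "x $ i" "z $ i"]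
      by (simp_all add: d_def xi zi)
    then show ?thesis
      using entry_bound_arith[OF _ assms(2) l[unfolded s_def] _ dm dist] entry N
      by (simp add: s_def d_def algebra_simps)
  qed
  then show ?thesis
    by (auto intro: inf_norm_le simp: N_def s_def l_def)
qed

end
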